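(* As $\ell\to0$, $\frac{F(\omega_1(\ell))+F(\omega_{-1}(\ell))}{2}=F(\kappa)$, $\frac{F(\omega_1(\ell))-F(\omega_{-1}(\ell))}{2}=\Big(F'(\kappa)+(\kappa F''(\kappa)-F'(\kappa))\frac{\ell^2}{2\kappa^2}\Big)\xi_+(\ell)+\frac16F'''(\kappa)\,\xi_+(\ell)^3+O(\ell^5)$, and $\xi_+(\ell)=\ell\sqrt{-\frac{F'(\kappa)}{\kappa F''(\kappa)}}\Big(1+\frac{\ell^2}{2\kappa^2}\Big(\frac34-\frac{F'(\kappa)}{\kappa F''(\kappa)}+\frac\kappa4\Big(\frac{F''(\kappa)}{F'(\kappa)}-2\frac{F'''(\kappa)}{F''(\kappa)}\Big)+\frac{\kappa}{12}\frac{F''''(\kappa)F'(\kappa)}{F''(\kappa)^2}\Big)\Big)+O(\ell^5)$.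
   Context: Fix $\kappa>0$ and set $\mu_0:=\kappa/\tanh(\kappa)$. Let $F:\mathbb R\to\mathbb R$ be the odd analytic function with $F(r)=\sqrt{r\tanh r}$ for $r\ge0$ (one has $F'>0$ and $F''(\kappa)<0$). For $n\in\mathbb Z$, $(\ell,\xi)\in\mathbb R^2$ set $|n\kappa|_{\ell,\xi}:=\sqrt{(n\kappa+\xi)^2+\ell^2}$ and $\lambda^\pm_{n,\ell,\xi}:=i(n\kappa+\xi\pm\sqrt{\mu_0}F(|n\kappa|_{\ell,\xi}))$. Let $\xi_+$ be the odd analytic function defined near $0$ with $\xi_+'(0)>0$ such that $\lambda^-_{1,\ell,\xi_+(\ell)}=\lambda^+_{-1,\ell,\xi_+(\ell)}$ for all small $\ell$, and set $\omega_j(\ell):=\sqrt{(j\kappa+\xi_+(\ell))^2+\ell^2}$ for $j\in\mathbb Z$. *)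

theory Defs
  imports "HOL-Analysis.Analysis" "HOL-Library.Landau_Symbols"
begin

definition Fw :: "real \<Rightarrow> real" where
  "Fw r = sgn r * sqrt (r * tanh r)"

definition Fd :: "nat \<Rightarrow> real \<Rightarrow> real" where
  "Fd k = (deriv ^^ k) Fw"

definition mu0 :: "real \<Rightarrow> real" where
  "mu0 \<kappa> = \<kappa> / tanh \<kappa>"

definition absn :: "real \<Rightarrow> int \<Rightarrow> real \<Rightarrow> real \<Rightarrow> real" where
  "absn \<kappa> n l \<xi> = sqrt ((of_int n * \<kappa> + \<xi>)^2 + l^2)"

definition lam_plus :: "real \<Rightarrow> int \<Rightarrow> real \<Rightarrow> real \<Rightarrow> complex" where
  "lam_plus \<kappa> n l \<xi> = \<i> * complex_of_real (of_int n * \<kappa> + \<xi> + sqrt (mu0 \<kappa>) * Fw (absn \<kappa> n l \<xi>))"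

definition lam_minus :: "real \<Rightarrow> int \<Rightarrow> real \<Rightarrow> real \<Rightarrow> complex" where
  "lam_minus \<kappa> n l \<xi> = \<i> * complex_of_real (of_int n * \<kappa> + \<xi> - sqrt (mu0 \<kappa>) * Fw (absn \<kappa> n l \<xi>))"

definition real_analytic_on :: "(real \<Rightarrow> real) \<Rightarrow> real set \<Rightarrow> bool" where
  "real_analytic_on f S \<longleftrightarrow> (\<forall>x\<in>S. \<exists>r>0. \<exists>c::nat \<Rightarrow> real.
      \<forall>y. \<bar>y - x\<bar> < r \<longrightarrow> (\<lambda>n. c n * (y - x)^n) sums f y)"

definition omega :: "real \<Rightarrow> (real \<Rightarrow> real) \<Rightarrow> int \<Rightarrow> real \<Rightarrow> real" where
  "omega \<kappa> xi j l = sqrt ((of_int j * \<kappa> + xi l)^2 + l^2)"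

end

theory Submission
  imports Defs "HOL-Computational_Algebra.Polynomial" "HOL-Complex_Analysis.Cauchy_Integral_Formula"
begin

text \<open>
  Write \<open>\<xi>\<^sub>+(l) = l y(l)\<close>, where \<open>y(l) \<rightarrow> \<xi>\<^sub>+'(0) > 0\<close>.  Then \<open>\<omega>\<^sub>\<plusminus>\<^sub>1 = \<kappa> \<surd>(1 + t\<^sub>\<plusminus>)\<close>
  with \<open>t\<^sub>\<plusminus> = \<plusminus>l Y + l\<^sup>2 Z\<close>, \<open>Y = 2y/\<kappa>\<close>, \<open>Z = (1 + y\<^sup>2)/\<kappa>\<^sup>2\<close>, so both \<open>F(\<omega>\<^sub>\<plusminus>\<^sub>1)\<close> are values of
  \<open>G(t) = F(\<kappa> \<surd>(1 + t))\<close>, whose Taylor polynomial of degree 5 at \<open>0\<close> comes from those of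
  \<open>F\<close> at \<open>\<kappa>\<close> and of \<open>\<surd>(1 + t)\<close> at \<open>0\<close>; \<open>F\<close> is smooth on \<open>(0, \<infinity>)\<close> because it extends
  holomorphically.  The resonance condition is exactly \<open>F(\<omega>\<^sub>1) + F(\<omega>\<^sub>-\<^sub>1) = 2 F(\<kappa>)\<close>.
  The odd part of the Taylor polynomial at \<open>t\<^sub>\<plusminus>\<close> gives the second expansion.  The even part,
  which the resonance condition forces to vanish, yields
  \<open>\<kappa>\<^sup>2 F''(\<kappa>)/2 y\<^sup>2 + \<kappa> F'(\<kappa>)/2 + l\<^sup>2 B(y\<^sup>2) = O(l\<^sup>4)\<close> for a polynomial \<open>B\<close>; expanding
  its positive root to order \<open>l\<^sup>2\<close> gives the third.
\<close>

section \<open>Smoothness of \<open>F\<close> on the positive axis\<close>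

lemma cosh_of_real: "cosh (complex_of_real x) = of_real (cosh x)"
  and sinh_of_real: "sinh (complex_of_real x) = of_real (sinh x)"
  by (simp_all add: cosh_def sinh_def exp_of_real scaleR_conv_of_real flip: exp_of_real)

lemma tanh_of_real: "tanh (complex_of_real x) = of_real (tanh x)"
  by (simp add: tanh_def cosh_of_real sinh_of_real)

definition Fc :: "complex \<Rightarrow> complex" where
  "Fc z = csqrt (z * tanh z)"

definition Fc_domain :: "complex set" where
  "Fc_domain = {z. cosh z \<noteq> 0} \<inter> (\<lambda>z. z * tanh z) -` (- \<real>\<^sub>\<le>\<^sub>0)"

lemma open_Fc_domain: "open Fc_domain"
proof -
  have "continuous_on {z::complex. cosh z \<noteq> 0} (\<lambda>z. z * tanh z)"
    unfolding tanh_def by (intro continuous_intros) auto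
  moreover have "open {z::complex. cosh z \<noteq> 0}"
    by (intro open_Collect_neq continuous_intros)
  ultimately show ?thesis
    unfolding Fc_domain_def by (intro continuous_open_preimage) auto
qed

lemma holomorphic_Fc: "Fc holomorphic_on Fc_domain"
  unfolding holomorphic_on_open[OF open_Fc_domain]
  unfolding Fc_def Fc_domain_def by (auto intro!: derivative_eq_intros)

lemma of_real_in_Fc_domain:
  assumes "x > 0"
  shows "complex_of_real x \<in> Fc_domain"
proof -
  have "x * tanh x > 0"
    using assms by simp
  then show ?thesis
    unfolding Fc_domain_def
    by (auto simp: cosh_of_real tanh_of_real complex_nonpos_Reals_iff simp flip: of_real_mult)
qed

lemma has_real_derivative_Re_higher_deriv_Fc:
  assumes "x > 0"
  shows "((\<lambda>t. Re ((deriv ^^ n) Fc (of_real t))) has_real_derivative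
           Re ((deriv ^^ Suc n) Fc (of_real x))) (at x)"
proof -
  have "((deriv ^^ n) Fc has_field_derivative (deriv ^^ Suc n) Fc (of_real x)) (at (of_real x))"
    using holomorphic_derivI[OF holomorphic_higher_deriv[OF holomorphic_Fc open_Fc_domain]
        open_Fc_domain of_real_in_Fc_domain[OF assms]]
    by simp
  then show ?thesis
    by (intro has_field_derivative_Re has_vector_derivative_real_field)
qed

text \<open>\<open>Fd\<close> iterates \<open>deriv\<close>, so it only means something where \<open>Fw\<close> is smooth; on \<open>(0, \<infinity>)\<close> it
  agrees with the derivatives of the holomorphic extension \<open>Fc\<close>.\<close>

lemma Fd_eq_Re_higher_deriv_Fc: "x > 0 \<Longrightarrow> Fd n x = Re ((deriv ^^ n) Fc (of_real x))"
proof (induction n arbitrary: x)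
  case 0
  then have "x * tanh x \<ge> 0" by simp
  with 0 show ?case
    by (simp add: Fd_def Fw_def Fc_def tanh_of_real flip: of_real_mult)
next
  case (Suc n)
  have "(Fd n has_real_derivative Re ((deriv ^^ Suc n) Fc (of_real x))) (at x)"
    by (rule has_field_derivative_transform_within_open
          [OF has_real_derivative_Re_higher_deriv_Fc[OF Suc.prems], where S = "{0<..}"])
       (use Suc in auto)
  then show ?case by (simp add: Fd_def DERIV_imp_deriv)
qed

lemma has_real_derivative_Fd: "x > 0 \<Longrightarrow> (Fd n has_real_derivative Fd (Suc n) x) (at x)"
  using has_field_derivative_transform_within_open
      [OF has_real_derivative_Re_higher_deriv_Fc, where S = "{0<..}"]
  by (simp add: Fd_eq_Re_higher_deriv_Fc)

lemma Fd_0 [simp]: "Fd 0 = Fw"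
  by (simp add: Fd_def)

lemma Fd_1_pos:
  assumes "x > 0"
  shows "Fd 1 x > 0"
proof -
  define D where "D = (tanh x + x * (1 - tanh x ^ 2)) / (2 * sqrt (x * tanh x))"
  have "x * tanh x > 0"
    using assms by simp
  then have "((\<lambda>t. sqrt (t * tanh t)) has_real_derivative D) (at x)"
    unfolding D_def by (auto intro!: derivative_eq_intros simp: divide_simps)
  then have "(Fw has_real_derivative D) (at x)"
    by (rule has_field_derivative_transform_within_open[where S = "{0<..}"])
       (use assms in \<open>auto simp: Fw_def\<close>)
  then have "Fd 1 x = D"
    using DERIV_unique[OF has_real_derivative_Fd[OF assms, of 0]] by simp
  moreover have "tanh x ^ 2 < 1"
    using tanh_real_bounds[of x] by (simp add: abs_square_less_1 abs_less_iff)
  then have "tanh x + x * (1 - tanh x ^ 2) > 0"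
    using assms by (intro add_pos_pos) simp_all
  ultimately show ?thesis
    using \<open>x * tanh x > 0\<close> by (simp add: D_def)
qed

section \<open>Landau estimates at \<open>0\<close>\<close>

lemma bigo_mult_tendsto:
  fixes g B :: "'a \<Rightarrow> real"
  assumes "(B \<longlongrightarrow> c) F"
  shows "(\<lambda>x. g x * B x) \<in> O[F](g)"
  using assms by (intro landau_o.big_1_mult landau_o.big_refl bigoI_tendsto[where c = c]) auto

lemma bigo_at_imp_bigo_nhds:
  fixes f g :: "real \<Rightarrow> real"
  assumes "f \<in> O[at a](g)" and "f a = 0"
  shows "f \<in> O[nhds a](g)"
proof -
  from assms(1) obtain c where "c > 0" and "eventually (\<lambda>x. norm (f x) \<le> c * norm (g x)) (at a)"
    by (elim landau_o.bigE)
  then have "eventually (\<lambda>x. norm (f x) \<le> c * norm (g x)) (nhds a)"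
    using assms(2) by (auto simp: eventually_at_filter elim: eventually_mono)
  then show ?thesis by (rule bigoI)
qed

lemma bigo_power_mono_at_0:
  assumes "n \<le> k"
  shows "(\<lambda>l. l ^ k) \<in> O[at (0::real)](\<lambda>l. l ^ n)"
proof -
  have "(\<lambda>l. l ^ n * l ^ (k - n)) \<in> O[at (0::real)](\<lambda>l. l ^ n)"
    by (rule bigo_mult_tendsto[where c = "0 ^ (k - n)"]) (intro tendsto_intros)
  then show ?thesis
    using assms by (simp flip: power_add)
qed

lemma bigo_power_cancel_at_0:
  fixes f :: "real \<Rightarrow> real"
  assumes "(\<lambda>l. l ^ k * f l) \<in> O[at 0](\<lambda>l. l ^ (k + n))"
  shows "f \<in> O[at 0](\<lambda>l. l ^ n)"
proof -
  have "eventually (\<lambda>l::real. l \<noteq> 0) (at 0)"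
    by (simp add: eventually_at_filter)
  then have nz: "eventually (\<lambda>l::real. l ^ k \<noteq> 0) (at 0)"
    by eventually_elim simp
  have "(\<lambda>l. l ^ k * f l) \<in> O[at 0](\<lambda>l. l ^ k * l ^ n)"
    using assms by (simp add: power_add)
  then show ?thesis
    by (subst (asm) landau_o.big.mult_cancel_left[OF bigthetaI_cong nz]) simp_all
qed

lemma bigo_power_tendsto_0:
  fixes f :: "real \<Rightarrow> real"
  assumes "f \<in> O[at 0](\<lambda>l. l ^ n)" and "n > 0"
  shows "(f \<longlongrightarrow> 0) (at 0)"
proof -
  from assms(1) obtain c where c: "eventually (\<lambda>x. norm (f x) \<le> c * norm (x ^ n)) (at 0)"
    by (elim landau_o.bigE)
  have "((\<lambda>x::real. c * norm (x ^ n)) \<longlongrightarrow> c * norm ((0::real) ^ n)) (at 0)"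
    by (intro tendsto_intros)
  then have "((\<lambda>x::real. c * norm (x ^ n)) \<longlongrightarrow> 0) (at 0)"
    using assms(2) by (simp add: power_0_left)
  then show ?thesis
    by (rule Lim_null_comparison[OF c])
qed

lemma bigo_power_diff:
  fixes a b :: "'a \<Rightarrow> real"
  assumes "(\<lambda>x. a x - b x) \<in> O[F](h)" and "a \<in> O[F](\<lambda>_. 1)" and "b \<in> O[F](\<lambda>_. 1)"
  shows "(\<lambda>x. a x ^ m - b x ^ m) \<in> O[F](h)"
proof (induction m)
  case (Suc m)
  have "(\<lambda>x. a x * (a x ^ m - b x ^ m)) \<in> O[F](h)"
    using landau_o.big_mult[OF assms(2) Suc] by simp
  moreover have "(\<lambda>x. b x ^ m * (a x - b x)) \<in> O[F](h)"
    using landau_o.big_mult[OF landau_o.big_power[OF assms(3)] assms(1)] by simp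
  ultimately have "(\<lambda>x. a x * (a x ^ m - b x ^ m) + b x ^ m * (a x - b x)) \<in> O[F](h)"
    by (rule sum_in_bigo)
  then show ?case
    by (simp add: algebra_simps)
qed simp

lemma bigo_compose_scaled:
  fixes f :: "real \<Rightarrow> real"
  assumes "f \<in> O[nhds 0](\<lambda>t. t ^ n)" and "(W \<longlongrightarrow> w) (at 0)"
  shows "(\<lambda>l. f (l * W l)) \<in> O[at 0](\<lambda>l. l ^ n)"
proof -
  have "((\<lambda>l. l * W l) \<longlongrightarrow> 0 * w) (at 0)"
    by (intro tendsto_intros assms(2))
  then have "(\<lambda>l. f (l * W l)) \<in> O[at 0](\<lambda>l. (l * W l) ^ n)"
    using landau_o.big.compose[OF assms(1)] by simp
  also have "(\<lambda>l. (l * W l) ^ n) \<in> O[at 0](\<lambda>l. l ^ n)"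
    unfolding power_mult_distrib by (rule bigo_mult_tendsto[where c = "w ^ n"]) (intro tendsto_intros assms(2))
  finally show ?thesis .
qed

lemma poly_bigo_power_at_0:
  fixes p :: "real poly"
  assumes "\<forall>i<n. coeff p i = 0"
  shows "poly p \<in> O[at 0](\<lambda>t. t ^ n)"
  using assms
proof (induction n arbitrary: p)
  case 0
  have "(poly p \<longlongrightarrow> poly p 0) (at 0)"
    by (intro tendsto_intros)
  then show ?case
    using bigo_mult_tendsto[of "poly p" _ _ "\<lambda>_. 1"] by simp
next
  case (Suc n)
  obtain a q where p: "p = pCons a q"
    by (cases p)
  have "a = 0" and "\<forall>i<n. coeff q i = 0"
    using Suc.prems spec[OF Suc.prems, of 0] spec[OF Suc.prems, of "Suc i" for i] by (auto simp: p)
  then have "(\<lambda>t. t * poly q t) \<in> O[at 0](\<lambda>t. t * t ^ n)"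
    using Suc.IH by (intro landau_o.big.mult_left) auto
  then show ?case
    by (simp add: p \<open>a = 0\<close>)
qed

lemma poly_cutoff_bigo_at_0:
  fixes p :: "real poly"
  shows "(\<lambda>t. poly p t - poly (poly_cutoff n p) t) \<in> O[at 0](\<lambda>t. t ^ n)"
proof -
  have "poly (p - poly_cutoff n p) \<in> O[at 0](\<lambda>t. t ^ n)"
    by (rule poly_bigo_power_at_0) (simp add: coeff_poly_cutoff)
  then show ?thesis
    by (simp add: poly_diff[abs_def])
qed

lemma poly_diff_bigo:
  fixes p :: "real poly"
  assumes "(u \<longlongrightarrow> c) F"
  shows "(\<lambda>x. poly p (u x) - poly p c) \<in> O[F](\<lambda>x. u x - c)"
proof -
  have "poly p (u x) - poly p c = (u x - c) * poly (synthetic_div p c) (u x)" for x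
    using arg_cong[OF synthetic_div_correct'[of c p], of "\<lambda>q. poly q (u x)"] by (simp add: algebra_simps)
  moreover have "((\<lambda>x. poly (synthetic_div p c) (u x)) \<longlongrightarrow> poly (synthetic_div p c) c) F"
    by (intro tendsto_intros assms)
  ultimately show ?thesis
    by (simp add: bigo_mult_tendsto)
qed

section \<open>Taylor expansions\<close>

lemma real_analytic_on_imp_has_deriv:
  assumes "real_analytic_on f S" and "x \<in> S"
  shows "(f has_real_derivative deriv f x) (at x)"
proof -
  from assms obtain r c where "r > 0" and c: "\<And>y. \<bar>y - x\<bar> < r \<Longrightarrow> (\<lambda>n. c n * (y - x) ^ n) sums f y"
    unfolding real_analytic_on_def by blast
  have "summable (\<lambda>n. c n * (r / 2) ^ n)"
    using c[of "x + r / 2"] \<open>r > 0\<close> by (simp add: sums_iff)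
  then have "((\<lambda>z. \<Sum>n. c n * z ^ n) has_real_derivative (\<Sum>n. diffs c n * (x - x) ^ n)) (at (x - x))"
    by (rule termdiffs_strong) (use \<open>r > 0\<close> in simp)
  moreover have "((\<lambda>y. y - x) has_real_derivative 1) (at x)"
    by (auto intro!: derivative_eq_intros)
  ultimately have "((\<lambda>y. \<Sum>n. c n * (y - x) ^ n) has_real_derivative (\<Sum>n. diffs c n * 0 ^ n)) (at x)"
    using DERIV_chain2 by fastforce
  then have "(f has_real_derivative (\<Sum>n. diffs c n * 0 ^ n)) (at x)"
  proof (rule has_field_derivative_transform_within_open[where S = "{x - r<..<x + r}"])
    show "(\<Sum>n. c n * (y - x) ^ n) = f y" if "y \<in> {x - r<..<x + r}" for y
      using c[of y] that by (simp add: abs_less_iff sums_iff)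
  qed (use \<open>r > 0\<close> in auto)
  then show ?thesis
    by (simp add: DERIV_imp_deriv)
qed

lemma has_real_derivative_at_0_imp_slope:
  fixes f :: "real \<Rightarrow> real"
  assumes "(f has_real_derivative s) (at 0)" and "f 0 = 0"
  shows "f = (\<lambda>l. l * (f l / l))" and "((\<lambda>l. f l / l) \<longlongrightarrow> s) (at 0)"
  using assms by (auto simp: fun_eq_iff DERIV_def)

lemma taylor_bigo_nhds_0:
  fixes f :: "real \<Rightarrow> real"
  assumes "r > 0" and "n > 0" and "D 0 = f"
    and "\<And>m t. m < n \<Longrightarrow> t \<in> {a - r..a + r} \<Longrightarrow> (D m has_real_derivative D (Suc m) t) (at t)"
    and "continuous_on {a - r..a + r} (D n)"
  shows "(\<lambda>u. f (a + u) - (\<Sum>m<n. D m a / fact m * u ^ m)) \<in> O[nhds 0](\<lambda>u. u ^ n)"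
proof -
  obtain M where M: "\<And>t. t \<in> {a - r..a + r} \<Longrightarrow> \<bar>D n t\<bar> \<le> M"
    using compact_imp_bounded[OF compact_continuous_image[OF assms(5) compact_Icc]]
    unfolding bounded_iff by force
  have "eventually (\<lambda>u. u \<in> {-r<..<r}) (nhds (0::real))"
    by (rule eventually_nhds_in_open) (use assms(1) in auto)
  then have "eventually (\<lambda>u. norm (f (a + u) - (\<Sum>m<n. D m a / fact m * u ^ m))
      \<le> M / fact n * norm (u ^ n)) (nhds 0)"
  proof eventually_elim
    case (elim u)
    show ?case
    proof (cases "u = 0")
      case True
      then show ?thesis
        using assms(2,3) by (cases n) (simp_all add: lessThan_Suc_eq_insert_0 sum.reindex)
    next
      case False
      then obtain t where t: "if a + u < a then a + u < t \<and> t < a else a < t \<and> t < a + u"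
        and taylor: "f (a + u) = (\<Sum>m<n. D m a / fact m * (a + u - a) ^ m) + D n t / fact n * (a + u - a) ^ n"
        using Taylor[of n D f "a - r" "a + r" a "a + u"] assms elim by auto
      have "t \<in> {a - r..a + r}"
        using t elim by (auto split: if_splits)
      then have "\<bar>D n t\<bar> / fact n * \<bar>u ^ n\<bar> \<le> M / fact n * \<bar>u ^ n\<bar>"
        using M by (intro mult_right_mono divide_right_mono) auto
      then show ?thesis
        using taylor by (simp add: abs_mult)
    qed
  qed
  then show ?thesis by (rule bigoI)
qed

lemma Fw_taylor_bigo:
  assumes "\<kappa> > 0" and "n > 0"
  shows "(\<lambda>u. Fw (\<kappa> + u) - (\<Sum>m<n. Fd m \<kappa> / fact m * u ^ m)) \<in> O[nhds 0](\<lambda>u. u ^ n)"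
proof (rule taylor_bigo_nhds_0)
  show "continuous_on {\<kappa> - \<kappa>/2..\<kappa> + \<kappa>/2} (Fd n)"
    using assms by (intro continuous_at_imp_continuous_on ballI DERIV_isCont[OF has_real_derivative_Fd]) auto
qed (use assms in \<open>auto intro: has_real_derivative_Fd\<close>)

text \<open>The degree-5 Taylor polynomial of \<open>sqrt (1 + t) - 1\<close>; its coefficients are \<open>1/2 gchoose i\<close>.\<close>

definition sqrt1p_jet :: "real poly" where
  "sqrt1p_jet = [:0, 1/2, -1/8, 1/16, -5/128, 7/256:]"

lemma sqrt1p_jet_bigo: "(\<lambda>t. sqrt (1 + t) - 1 - poly sqrt1p_jet t) \<in> O[at 0](\<lambda>t. t ^ 6)"
proof -
  define q where "q = poly sqrt1p_jet"
  define d where "d t = sqrt (1 + t) - 1 + q t + 2" for t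
  \<comment> \<open>\<open>(\<surd>(1 + t) - 1 - q t) d t = t - (q t\<^sup>2 + 2 q t)\<close>, and \<open>q\<^sup>2 + 2q - t\<close> vanishes to order 6\<close>
  have "\<forall>i<6. coeff (sqrt1p_jet ^ 2 + smult 2 sqrt1p_jet - [:0, 1:]) i = 0"
    by (simp add: sqrt1p_jet_def eval_nat_numeral less_Suc_eq)
  moreover have "(\<lambda>t. q t ^ 2 + 2 * q t - t) = poly (sqrt1p_jet ^ 2 + smult 2 sqrt1p_jet - [:0, 1:])"
    by (simp add: fun_eq_iff q_def)
  ultimately have defect: "(\<lambda>t. q t ^ 2 + 2 * q t - t) \<in> O[at 0](\<lambda>t. t ^ 6)"
    by (simp only: poly_bigo_power_at_0)
  have "(d \<longlongrightarrow> sqrt (1 + 0) - 1 + q 0 + 2) (at 0)"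
    unfolding d_def q_def by (intro tendsto_intros)
  then have d_lim: "(d \<longlongrightarrow> 2) (at 0)"
    by (simp add: q_def sqrt1p_jet_def)
  have "((\<lambda>t. - 1 / d t) \<longlongrightarrow> - 1 / 2) (at 0)"
    by (intro tendsto_intros d_lim) simp
  from landau_o.big_trans[OF bigo_mult_tendsto[OF this] defect]
  have bigo: "(\<lambda>t. (q t ^ 2 + 2 * q t - t) * (- 1 / d t)) \<in> O[at 0](\<lambda>t. t ^ 6)" .
  have "eventually (\<lambda>t. t > - 1) (at (0::real))"
    by (rule order_tendstoD(1)[OF tendsto_ident_at]) simp
  moreover have "eventually (\<lambda>t. d t > 1) (at 0)"
    by (rule order_tendstoD(1)[OF d_lim]) simp
  ultimately have "eventually (\<lambda>t. (q t ^ 2 + 2 * q t - t) * (- 1 / d t) = sqrt (1 + t) - 1 - q t) (at 0)"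
  proof eventually_elim
    case (elim t)
    then have "sqrt (1 + t) ^ 2 = 1 + t"
      by simp
    then have "(sqrt (1 + t) - 1 - q t) * d t = - (q t ^ 2 + 2 * q t - t)"
      unfolding d_def by algebra
    with elim show ?case
      by (simp add: field_simps)
  qed
  from landau_o.big.in_cong[OF this] bigo show ?thesis
    by (simp add: q_def)
qed

lemma sqrt1p_minus_1_bigo: "(\<lambda>t. sqrt (1 + t) - 1) \<in> O[at 0](\<lambda>t. t)"
proof -
  have "poly sqrt1p_jet \<in> O[at 0](\<lambda>t. t)"
    using poly_bigo_power_at_0[of 1 sqrt1p_jet] by (simp add: sqrt1p_jet_def)
  with landau_o.big_trans[OF sqrt1p_jet_bigo bigo_power_mono_at_0[of 1 6, simplified]]
  show ?thesis
    using sum_in_bigo(1) by fastforce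
qed

definition Fw_sqrt_jet :: "real \<Rightarrow> real poly" where
  "Fw_sqrt_jet \<kappa> = poly_cutoff 6 (\<Sum>m<6. smult (Fd m \<kappa> * \<kappa> ^ m / fact m) (sqrt1p_jet ^ m))"

lemma degree_Fw_sqrt_jet: "degree (Fw_sqrt_jet \<kappa>) \<le> 5"
  by (rule degree_le) (simp add: Fw_sqrt_jet_def coeff_poly_cutoff)

lemma coeff_Fw_sqrt_jet:
  "coeff (Fw_sqrt_jet \<kappa>) 0 = Fw \<kappa>"
  "coeff (Fw_sqrt_jet \<kappa>) 1 = \<kappa> * Fd 1 \<kappa> / 2"
  "coeff (Fw_sqrt_jet \<kappa>) 2 = (\<kappa>^2 * Fd 2 \<kappa> - \<kappa> * Fd 1 \<kappa>) / 8"
  "coeff (Fw_sqrt_jet \<kappa>) 3 = \<kappa> * Fd 1 \<kappa> / 16 - \<kappa>^2 * Fd 2 \<kappa> / 16 + \<kappa>^3 * Fd 3 \<kappa> / 48"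
  "coeff (Fw_sqrt_jet \<kappa>) 4 = - 5 * \<kappa> * Fd 1 \<kappa> / 128 + 5 * \<kappa>^2 * Fd 2 \<kappa> / 128
      - \<kappa>^3 * Fd 3 \<kappa> / 64 + \<kappa>^4 * Fd 4 \<kappa> / 384"
  by (simp_all add: Fw_sqrt_jet_def sqrt1p_jet_def coeff_poly_cutoff coeff_sum eval_nat_numeral field_simps)

lemma Fw_sqrt_taylor_bigo:
  assumes "\<kappa> > 0"
  shows "(\<lambda>t. Fw (\<kappa> * sqrt (1 + t)) - (\<Sum>m<6. Fd m \<kappa> * \<kappa> ^ m / fact m * (sqrt (1 + t) - 1) ^ m))
    \<in> O[at 0](\<lambda>t. t ^ 6)"
proof -
  define u where "u t = \<kappa> * (sqrt (1 + t) - 1)" for t :: real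
  have "(u \<longlongrightarrow> \<kappa> * (sqrt (1 + 0) - 1)) (at 0)"
    unfolding u_def by (intro tendsto_intros)
  then have "(\<lambda>t. Fw (\<kappa> + u t) - (\<Sum>m<6. Fd m \<kappa> / fact m * u t ^ m)) \<in> O[at 0](\<lambda>t. u t ^ 6)"
    using landau_o.big.compose[OF Fw_taylor_bigo[OF assms, of 6]] by simp
  also have "(\<lambda>t. u t ^ 6) \<in> O[at 0](\<lambda>t. t ^ 6)"
    unfolding u_def using assms by (intro landau_o.big_power) (simp add: sqrt1p_minus_1_bigo)
  finally have "(\<lambda>t. Fw (\<kappa> + u t) - (\<Sum>m<6. Fd m \<kappa> / fact m * u t ^ m)) \<in> O[at 0](\<lambda>t. t ^ 6)" .
  moreover have "\<kappa> + u t = \<kappa> * sqrt (1 + t)" for t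
    by (simp add: u_def algebra_simps)
  moreover have "Fd m \<kappa> / fact m * u t ^ m = Fd m \<kappa> * \<kappa> ^ m / fact m * (sqrt (1 + t) - 1) ^ m" for m t
    by (simp add: u_def power_mult_distrib)
  ultimately show ?thesis
    by (simp only:)
qed

lemma Fw_sqrt_jet_bigo:
  assumes "\<kappa> > 0"
  shows "(\<lambda>t. Fw (\<kappa> * sqrt (1 + t)) - poly (Fw_sqrt_jet \<kappa>) t) \<in> O[nhds 0](\<lambda>t. t ^ 6)"
proof -
  define \<tau> where "\<tau> t = sqrt (1 + t) - 1" for t :: real
  define q where "q = poly sqrt1p_jet"
  define c where "c m = Fd m \<kappa> * \<kappa> ^ m / fact m" for m
  have "(\<lambda>t::real. t) \<in> O[at 0](\<lambda>_. 1)"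
    using bigo_power_mono_at_0[of 0 1] by simp
  then have "\<tau> \<in> O[at 0](\<lambda>_. 1)" and "q \<in> O[at 0](\<lambda>_. 1)"
    using landau_o.big_trans[OF sqrt1p_minus_1_bigo] landau_o.big_trans[OF poly_bigo_power_at_0[of 1 sqrt1p_jet]]
    by (simp_all add: \<tau>_def[abs_def] q_def sqrt1p_jet_def)
  with sqrt1p_jet_bigo have "(\<lambda>t. \<tau> t ^ m - q t ^ m) \<in> O[at 0](\<lambda>t. t ^ 6)" for m
    by (intro bigo_power_diff) (simp_all add: \<tau>_def[abs_def] q_def)
  then have "(\<lambda>t. \<Sum>m<6. c m * (\<tau> t ^ m - q t ^ m)) \<in> O[at 0](\<lambda>t. t ^ 6)"
    by (intro big_sum_in_bigo) simp
  then have "(\<lambda>t. (\<Sum>m<6. c m * \<tau> t ^ m) - (\<Sum>m<6. c m * q t ^ m)) \<in> O[at 0](\<lambda>t. t ^ 6)"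
    by (simp add: sum_subtractf right_diff_distrib)
  moreover have "(\<lambda>t. (\<Sum>m<6. c m * q t ^ m) - poly (Fw_sqrt_jet \<kappa>) t) \<in> O[at 0](\<lambda>t. t ^ 6)"
    using poly_cutoff_bigo_at_0[of "\<Sum>m<6. smult (c m) (sqrt1p_jet ^ m)" 6]
    by (simp add: Fw_sqrt_jet_def c_def q_def poly_sum)
  ultimately have "(\<lambda>t. Fw (\<kappa> * sqrt (1 + t)) - poly (Fw_sqrt_jet \<kappa>) t) \<in> O[at 0](\<lambda>t. t ^ 6)"
    using sum_in_bigo(1)[OF sum_in_bigo(1)[OF Fw_sqrt_taylor_bigo[OF assms]]]
    by (fastforce simp: \<tau>_def c_def)
  moreover have "poly (Fw_sqrt_jet \<kappa>) 0 = Fw \<kappa>"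
    by (simp add: poly_0_coeff_0 coeff_Fw_sqrt_jet)
  ultimately show ?thesis
    by (intro bigo_at_imp_bigo_nhds) simp_all
qed

section \<open>Odd and even parts of a quintic\<close>

lemma poly_degree_le_5:
  fixes p :: "real poly"
  assumes "degree p \<le> 5"
  shows "poly p t = coeff p 0 + coeff p 1 * t + coeff p 2 * t^2 + coeff p 3 * t^3
    + coeff p 4 * t^4 + coeff p 5 * t^5"
proof -
  have "poly p t = poly (\<Sum>i\<le>5. monom (coeff p i) i) t"
    by (simp only: poly_as_sum_of_monoms'[OF assms])
  then show ?thesis
    by (simp add: poly_sum poly_monom eval_nat_numeral)
qed

lemma poly_odd_part_bigo:
  fixes p :: "real poly"
  assumes "degree p \<le> 5" and "(Y \<longlongrightarrow> a) (at 0)" and "(Z \<longlongrightarrow> b) (at 0)"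
  shows "(\<lambda>l. (poly p (l * Y l + l^2 * Z l) - poly p (- (l * Y l) + l^2 * Z l)) / 2
      - (coeff p 1 * l * Y l + 2 * coeff p 2 * l^3 * Y l * Z l + coeff p 3 * l^3 * Y l ^ 3))
    \<in> O[at 0](\<lambda>l. l ^ 5)"
proof -
  define c where "c = coeff p"
  define R where "R l = 3 * c 3 * Y l * Z l ^ 2 + 4 * c 4 * (Y l ^ 3 * Z l + l^2 * Y l * Z l ^ 3)
    + c 5 * (Y l ^ 5 + 10 * l^2 * Y l ^ 3 * Z l ^ 2 + 5 * l^4 * Y l * Z l ^ 4)" for l
  have "(R \<longlongrightarrow> 3 * c 3 * a * b ^ 2 + 4 * c 4 * (a ^ 3 * b + 0^2 * a * b ^ 3)
    + c 5 * (a ^ 5 + 10 * 0^2 * a ^ 3 * b ^ 2 + 5 * 0^4 * a * b ^ 4)) (at 0)"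
    unfolding R_def by (intro tendsto_intros assms(2,3))
  then have "(\<lambda>l. l ^ 5 * R l) \<in> O[at 0](\<lambda>l. l ^ 5)"
    by (rule bigo_mult_tendsto)
  moreover have odd: "(poly p (l * Y l + l^2 * Z l) - poly p (- (l * Y l) + l^2 * Z l)) / 2
      - (c 1 * l * Y l + 2 * c 2 * l^3 * Y l * Z l + c 3 * l^3 * Y l ^ 3) = l ^ 5 * R l" for l
    unfolding poly_degree_le_5[OF assms(1)] R_def c_def by algebra
  ultimately show ?thesis
    unfolding c_def[symmetric] odd by (simp only:)
qed

lemma poly_even_part_bigo:
  fixes p :: "real poly"
  assumes "degree p \<le> 5" and "(Y \<longlongrightarrow> a) (at 0)" and "(Z \<longlongrightarrow> b) (at 0)"
  shows "(\<lambda>l. (poly p (l * Y l + l^2 * Z l) + poly p (- (l * Y l) + l^2 * Z l)) / 2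
      - (coeff p 0 + l^2 * (coeff p 1 * Z l + coeff p 2 * Y l ^ 2)
         + l^4 * (coeff p 2 * Z l ^ 2 + 3 * coeff p 3 * Y l ^ 2 * Z l + coeff p 4 * Y l ^ 4)))
    \<in> O[at 0](\<lambda>l. l ^ 6)"
proof -
  define c where "c = coeff p"
  define R where "R l = c 3 * Z l ^ 3 + c 4 * (6 * Y l ^ 2 * Z l ^ 2 + l^2 * Z l ^ 4)
    + c 5 * (5 * Y l ^ 4 * Z l + 10 * l^2 * Y l ^ 2 * Z l ^ 3 + l^4 * Z l ^ 5)" for l
  have "(R \<longlongrightarrow> c 3 * b ^ 3 + c 4 * (6 * a ^ 2 * b ^ 2 + 0^2 * b ^ 4)
    + c 5 * (5 * a ^ 4 * b + 10 * 0^2 * a ^ 2 * b ^ 3 + 0^4 * b ^ 5)) (at 0)"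
    unfolding R_def by (intro tendsto_intros assms(2,3))
  then have "(\<lambda>l. l ^ 6 * R l) \<in> O[at 0](\<lambda>l. l ^ 6)"
    by (rule bigo_mult_tendsto)
  moreover have even: "(poly p (l * Y l + l^2 * Z l) + poly p (- (l * Y l) + l^2 * Z l)) / 2
      - (c 0 + l^2 * (c 1 * Z l + c 2 * Y l ^ 2)
         + l^4 * (c 2 * Z l ^ 2 + 3 * c 3 * Y l ^ 2 * Z l + c 4 * Y l ^ 4)) = l ^ 6 * R l" for l
    unfolding poly_degree_le_5[OF assms(1)] R_def c_def by algebra
  ultimately show ?thesis
    unfolding c_def[symmetric] even by (simp only:)
qed

section \<open>A perturbed quadratic equation\<close>

lemma square_expansion_imp_expansion:
  fixes y :: "real \<Rightarrow> real"
  assumes "(y \<longlongrightarrow> s) (at 0)" and "s > 0"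
    and "(\<lambda>l. y l ^ 2 - s ^ 2 - d * l ^ 2) \<in> O[at 0](\<lambda>l. l ^ 4)"
  shows "(\<lambda>l. y l - s - d * l ^ 2 / (2 * s)) \<in> O[at 0](\<lambda>l. l ^ 4)"
proof -
  define V where "V l = y l ^ 2 - s ^ 2" for l
  have "(\<lambda>l. V l - d * l ^ 2) \<in> O[at 0](\<lambda>l. l ^ 2)"
    using landau_o.big_trans[OF assms(3) bigo_power_mono_at_0[of 2 4]] by (simp add: V_def)
  from sum_in_bigo(1)[OF this, of "\<lambda>l. d * l ^ 2"] have "V \<in> O[at 0](\<lambda>l. l ^ 2)"
    by simp
  from landau_o.big_mult[OF this this] have V_sq: "(\<lambda>l. V l * V l) \<in> O[at 0](\<lambda>l. l ^ 4)"
    by (simp flip: power_add)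
  have "((\<lambda>l. - 1 / (2 * s * (y l + s) ^ 2)) \<longlongrightarrow> - 1 / (2 * s * (s + s) ^ 2)) (at 0)"
    using assms(2) by (intro tendsto_intros assms(1)) auto
  from landau_o.big_trans[OF bigo_mult_tendsto[OF this] V_sq]
  have "(\<lambda>l. (V l * V l) * (- 1 / (2 * s * (y l + s) ^ 2))) \<in> O[at 0](\<lambda>l. l ^ 4)" .
  moreover have "(\<lambda>l. (V l - d * l ^ 2) * (1 / (2 * s))) \<in> O[at 0](\<lambda>l. l ^ 4)"
    using landau_o.big_1_mult[OF assms(3) bigo_const] unfolding V_def .
  ultimately have bigo: "(\<lambda>l. (V l - d * l ^ 2) * (1 / (2 * s)) + (V l * V l) * (- 1 / (2 * s * (y l + s) ^ 2)))
      \<in> O[at 0](\<lambda>l. l ^ 4)"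
    by (intro sum_in_bigo)
  \<comment> \<open>\<open>y - s = V / (2 s) - V\<^sup>2 / (2 s (y + s)\<^sup>2)\<close>\<close>
  have "eventually (\<lambda>l. y l > 0) (at 0)"
    using order_tendstoD(1)[OF assms(1,2)] .
  then have "eventually (\<lambda>l. (V l - d * l ^ 2) * (1 / (2 * s)) + (V l * V l) * (- 1 / (2 * s * (y l + s) ^ 2))
      = y l - s - d * l ^ 2 / (2 * s)) (at 0)"
  proof eventually_elim
    case (elim l)
    with assms(2) have "y l + s \<noteq> 0" and "s \<noteq> 0"
      by auto
    then show ?case
      unfolding V_def by (simp add: field_simps) algebra
  qed
  from landau_o.big.in_cong[OF this, THEN iffD1, OF bigo] show ?thesis .
qed

lemma perturbed_quadratic_limit:
  fixes y :: "real \<Rightarrow> real" and b :: "real poly"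
  assumes "(y \<longlongrightarrow> s) (at 0)"
    and "(\<lambda>l. a * y l ^ 2 + c + l ^ 2 * poly b (y l ^ 2)) \<in> O[at 0](\<lambda>l. l ^ 4)"
  shows "a * s ^ 2 + c = 0"
proof -
  have "((\<lambda>l. a * y l ^ 2 + c + l ^ 2 * poly b (y l ^ 2)) \<longlongrightarrow> a * s ^ 2 + c + 0 ^ 2 * poly b (s ^ 2)) (at 0)"
    by (intro tendsto_intros assms(1))
  moreover have "((\<lambda>l. a * y l ^ 2 + c + l ^ 2 * poly b (y l ^ 2)) \<longlongrightarrow> 0) (at 0)"
    using bigo_power_tendsto_0[OF assms(2)] by simp
  ultimately have "a * s ^ 2 + c + 0 ^ 2 * poly b (s ^ 2) = 0"
    by (rule tendsto_unique[OF at_neq_bot])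
  then show ?thesis
    by simp
qed

lemma perturbed_quadratic_root:
  fixes y :: "real \<Rightarrow> real" and b :: "real poly"
  assumes "(y \<longlongrightarrow> s) (at 0)" and "s > 0" and "c \<noteq> 0"
    and "(\<lambda>l. a * y l ^ 2 + c + l ^ 2 * poly b (y l ^ 2)) \<in> O[at 0](\<lambda>l. l ^ 4)"
  shows "(\<lambda>l. y l - s + poly b (s ^ 2) / a * l ^ 2 / (2 * s)) \<in> O[at 0](\<lambda>l. l ^ 4)"
proof -
  define B where "B l = poly b (y l ^ 2)" for l
  have B_lim: "(B \<longlongrightarrow> poly b (s ^ 2)) (at 0)"
    unfolding B_def by (intro tendsto_intros assms(1))
  have root: "a * s ^ 2 + c = 0"
    using perturbed_quadratic_limit[OF assms(1,4)] .
  with assms(3) have "a \<noteq> 0"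
    by auto
  define V where "V l = y l ^ 2 - s ^ 2" for l
  have "(\<lambda>l. a * y l ^ 2 + c + l ^ 2 * poly b (y l ^ 2)) = (\<lambda>l. a * V l + l ^ 2 * B l)"
    using root by (auto simp: fun_eq_iff V_def B_def algebra_simps)
  with assms(4) have H: "(\<lambda>l. a * V l + l ^ 2 * B l) \<in> O[at 0](\<lambda>l. l ^ 4)"
    by simp
  have "(\<lambda>l. (a * V l + l ^ 2 * B l) - l ^ 2 * B l) \<in> O[at 0](\<lambda>l. l ^ 2)"
    using sum_in_bigo(2)[OF landau_o.big_trans[OF H bigo_power_mono_at_0[of 2 4]]
        bigo_mult_tendsto[OF B_lim]] by simp
  with \<open>a \<noteq> 0\<close> have V_sq: "V \<in> O[at 0](\<lambda>l. l ^ 2)"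
    by simp
  have "((\<lambda>l. y l ^ 2) \<longlongrightarrow> s ^ 2) (at 0)"
    by (intro tendsto_intros assms(1))
  from landau_o.big_trans[OF poly_diff_bigo[OF this] V_sq[unfolded V_def]]
  have "(\<lambda>l. l ^ 2 * (B l - poly b (s ^ 2))) \<in> O[at 0](\<lambda>l. l ^ 2 * l ^ 2)"
    unfolding B_def by (rule landau_o.big.mult_left)
  then have "(\<lambda>l. l ^ 2 * (B l - poly b (s ^ 2))) \<in> O[at 0](\<lambda>l. l ^ 4)"
    by (simp flip: power_add)
  from sum_in_bigo(2)[OF H this]
  have "(\<lambda>l. a * (y l ^ 2 - s ^ 2 - (- (poly b (s ^ 2) / a)) * l ^ 2)) \<in> O[at 0](\<lambda>l. l ^ 4)"
    using \<open>a \<noteq> 0\<close> by (simp add: V_def algebra_simps)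
  with \<open>a \<noteq> 0\<close> have "(\<lambda>l. y l ^ 2 - s ^ 2 - (- (poly b (s ^ 2) / a)) * l ^ 2) \<in> O[at 0](\<lambda>l. l ^ 4)"
    by simp
  from square_expansion_imp_expansion[OF assms(1,2) this] show ?thesis
    by simp
qed

section \<open>The resonance curve\<close>

text \<open>The resonance condition reads \<open>\<kappa> + \<xi> - \<surd>\<mu>\<^sub>0 F(\<omega>\<^sub>1) = -\<kappa> + \<xi> + \<surd>\<mu>\<^sub>0 F(\<omega>\<^sub>-\<^sub>1)\<close>,
  and \<open>\<surd>\<mu>\<^sub>0 F(\<kappa>) = \<kappa>\<close>.\<close>

lemma resonance_imp_Fw_sum:
  assumes "\<kappa> > 0" and "lam_minus \<kappa> 1 l \<xi> = lam_plus \<kappa> (-1) l \<xi>"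
  shows "Fw (absn \<kappa> 1 l \<xi>) + Fw (absn \<kappa> (-1) l \<xi>) = 2 * Fw \<kappa>"
proof -
  define m where "m = sqrt (mu0 \<kappa>)"
  have "\<i> * complex_of_real (\<kappa> + \<xi> - m * Fw (absn \<kappa> 1 l \<xi>))
      = \<i> * complex_of_real (- \<kappa> + \<xi> + m * Fw (absn \<kappa> (-1) l \<xi>))"
    using assms(2) unfolding lam_minus_def lam_plus_def m_def by simp
  then have "\<kappa> + \<xi> - m * Fw (absn \<kappa> 1 l \<xi>) = - \<kappa> + \<xi> + m * Fw (absn \<kappa> (-1) l \<xi>)"
    by (simp only: mult_cancel_left of_real_eq_iff) simp
  moreover have "tanh \<kappa> > 0"
    using assms(1) by simp
  then have "m * Fw \<kappa> = \<kappa>" and "m > 0"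
    using assms(1) by (simp_all add: m_def mu0_def Fw_def real_sqrt_mult[symmetric] field_simps)
  ultimately have "m * (Fw (absn \<kappa> 1 l \<xi>) + Fw (absn \<kappa> (-1) l \<xi>)) = m * (2 * Fw \<kappa>)"
    by (simp add: algebra_simps)
  with \<open>m > 0\<close> show ?thesis
    by simp
qed

lemma omega_eq_sqrt:
  fixes \<kappa> :: real and y :: "real \<Rightarrow> real"
  assumes "\<kappa> > 0"
  defines "Y \<equiv> \<lambda>l. 2 * y l / \<kappa>" and "Z \<equiv> \<lambda>l. (1 + y l ^ 2) / \<kappa> ^ 2"
  shows "omega \<kappa> (\<lambda>l. l * y l) 1 l = \<kappa> * sqrt (1 + (l * Y l + l ^ 2 * Z l))"
    and "omega \<kappa> (\<lambda>l. l * y l) (-1) l = \<kappa> * sqrt (1 + (- (l * Y l) + l ^ 2 * Z l))"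
proof -
  have "(\<sigma> * \<kappa> + l * y l) ^ 2 + l ^ 2 = \<kappa> ^ 2 * (1 + (\<sigma> * (l * Y l) + l ^ 2 * Z l))"
    if "\<sigma> ^ 2 = 1" for \<sigma>
    using assms(1) that unfolding Y_def Z_def by (simp add: field_simps) algebra
  from this[of 1] this[of "-1"] show
    "omega \<kappa> (\<lambda>l. l * y l) 1 l = \<kappa> * sqrt (1 + (l * Y l + l ^ 2 * Z l))"
    "omega \<kappa> (\<lambda>l. l * y l) (-1) l = \<kappa> * sqrt (1 + (- (l * Y l) + l ^ 2 * Z l))"
    using assms(1) by (simp_all add: omega_def real_sqrt_mult)
qed

lemma Fw_omega_bigo:
  fixes \<kappa> :: real and y :: "real \<Rightarrow> real"
  assumes "\<kappa> > 0" and "(y \<longlongrightarrow> s) (at 0)"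
  defines "Y \<equiv> \<lambda>l. 2 * y l / \<kappa>" and "Z \<equiv> \<lambda>l. (1 + y l ^ 2) / \<kappa> ^ 2"
  shows "(\<lambda>l. Fw (omega \<kappa> (\<lambda>l. l * y l) 1 l) - poly (Fw_sqrt_jet \<kappa>) (l * Y l + l ^ 2 * Z l))
      \<in> O[at 0](\<lambda>l. l ^ 6)"
    and "(\<lambda>l. Fw (omega \<kappa> (\<lambda>l. l * y l) (-1) l) - poly (Fw_sqrt_jet \<kappa>) (- (l * Y l) + l ^ 2 * Z l))
      \<in> O[at 0](\<lambda>l. l ^ 6)"
proof -
  have "((\<lambda>l. \<sigma> * Y l + l * Z l) \<longlongrightarrow> \<sigma> * (2 * s / \<kappa>) + 0 * ((1 + s ^ 2) / \<kappa> ^ 2)) (at 0)" for \<sigma>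
    unfolding Y_def Z_def by (intro tendsto_intros assms(2)) (use assms(1) in auto)
  from bigo_compose_scaled[OF Fw_sqrt_jet_bigo[OF assms(1)] this]
  have "(\<lambda>l. Fw (\<kappa> * sqrt (1 + l * (\<sigma> * Y l + l * Z l))) - poly (Fw_sqrt_jet \<kappa>) (l * (\<sigma> * Y l + l * Z l)))
      \<in> O[at 0](\<lambda>l. l ^ 6)" for \<sigma> .
  from this[of 1] this[of "-1"] show
    "(\<lambda>l. Fw (omega \<kappa> (\<lambda>l. l * y l) 1 l) - poly (Fw_sqrt_jet \<kappa>) (l * Y l + l ^ 2 * Z l)) \<in> O[at 0](\<lambda>l. l ^ 6)"
    "(\<lambda>l. Fw (omega \<kappa> (\<lambda>l. l * y l) (-1) l) - poly (Fw_sqrt_jet \<kappa>) (- (l * Y l) + l ^ 2 * Z l)) \<in> O[at 0](\<lambda>l. l ^ 6)"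
    by (simp_all add: omega_eq_sqrt[OF assms(1)] Y_def Z_def power2_eq_square algebra_simps)
qed

lemma Fw_omega_odd_part_bigo:
  fixes \<kappa> :: real and y :: "real \<Rightarrow> real"
  assumes "\<kappa> > 0" and "(y \<longlongrightarrow> s) (at 0)"
  shows "(\<lambda>l. (Fw (omega \<kappa> (\<lambda>l. l * y l) 1 l) - Fw (omega \<kappa> (\<lambda>l. l * y l) (-1) l)) / 2
      - ((Fd 1 \<kappa> + (\<kappa> * Fd 2 \<kappa> - Fd 1 \<kappa>) * l ^ 2 / (2 * \<kappa> ^ 2)) * (l * y l) + Fd 3 \<kappa> * (l * y l) ^ 3 / 6))
    \<in> O[at 0](\<lambda>l. l ^ 5)"
proof -
  define Y where "Y l = 2 * y l / \<kappa>" for l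
  define Z where "Z l = (1 + y l ^ 2) / \<kappa> ^ 2" for l
  define P where "P = Fw_sqrt_jet \<kappa>"
  have "(Y \<longlongrightarrow> 2 * s / \<kappa>) (at 0)" and "(Z \<longlongrightarrow> (1 + s ^ 2) / \<kappa> ^ 2) (at 0)"
    unfolding Y_def Z_def by (intro tendsto_intros assms(2); use assms(1) in simp)+
  from poly_odd_part_bigo[OF degree_Fw_sqrt_jet this]
  have odd: "(\<lambda>l. (poly P (l * Y l + l ^ 2 * Z l) - poly P (- (l * Y l) + l ^ 2 * Z l)) / 2
      - (coeff P 1 * l * Y l + 2 * coeff P 2 * l ^ 3 * Y l * Z l + coeff P 3 * l ^ 3 * Y l ^ 3))
    \<in> O[at 0](\<lambda>l. l ^ 5)"
    by (simp add: P_def)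
  have "(\<lambda>l. (Fw (omega \<kappa> (\<lambda>l. l * y l) 1 l) - poly P (l * Y l + l ^ 2 * Z l)) / 2
      - (Fw (omega \<kappa> (\<lambda>l. l * y l) (-1) l) - poly P (- (l * Y l) + l ^ 2 * Z l)) / 2) \<in> O[at 0](\<lambda>l. l ^ 6)"
    using Fw_omega_bigo[OF assms] by (intro sum_in_bigo) (simp_all add: P_def Y_def Z_def)
  from sum_in_bigo(1)[OF landau_o.big_trans[OF this bigo_power_mono_at_0[of 5 6, simplified]] odd]
  have "(\<lambda>l. (Fw (omega \<kappa> (\<lambda>l. l * y l) 1 l) - Fw (omega \<kappa> (\<lambda>l. l * y l) (-1) l)) / 2
      - (coeff P 1 * l * Y l + 2 * coeff P 2 * l ^ 3 * Y l * Z l + coeff P 3 * l ^ 3 * Y l ^ 3))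
    \<in> O[at 0](\<lambda>l. l ^ 5)"
    by (rule landau_o.big.in_cong[OF always_eventually, THEN iffD1, rotated]) (simp add: field_simps)
  moreover have "coeff P 1 * l * Y l + 2 * coeff P 2 * l ^ 3 * Y l * Z l + coeff P 3 * l ^ 3 * Y l ^ 3
      = (Fd 1 \<kappa> + (\<kappa> * Fd 2 \<kappa> - Fd 1 \<kappa>) * l ^ 2 / (2 * \<kappa> ^ 2)) * (l * y l) + Fd 3 \<kappa> * (l * y l) ^ 3 / 6" for l
    using assms(1) unfolding P_def Y_def Z_def coeff_Fw_sqrt_jet by (simp add: field_simps) algebra
  ultimately show ?thesis
    by simp
qed

text \<open>With \<open>c\<^sub>i\<close> the coefficients of \<open>Fw_sqrt_jet \<kappa>\<close>, the \<open>l\<^sup>4\<close>-term \<open>c\<^sub>2 Z\<^sup>2 + 3 c\<^sub>3 Y\<^sup>2 Z + c\<^sub>4 Y\<^sup>4\<close> of the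
  even part, written in \<open>u = y\<^sup>2\<close> (see \<open>omega_eq_sqrt\<close> for \<open>Y\<close> and \<open>Z\<close>), is
  \<open>poly (slope_correction_poly \<kappa>) u / \<kappa>\<^sup>2\<close>.\<close>

definition slope_correction_poly :: "real \<Rightarrow> real poly" where
  "slope_correction_poly \<kappa> = (let c = coeff (Fw_sqrt_jet \<kappa>) in
     smult (1 / \<kappa> ^ 2) [:c 2, 2 * c 2 + 12 * c 3, c 2 + 12 * c 3 + 16 * c 4:])"

lemma Fw_omega_even_part_bigo:
  fixes \<kappa> :: real and y :: "real \<Rightarrow> real"
  assumes "\<kappa> > 0" and "(y \<longlongrightarrow> s) (at 0)"
  shows "(\<lambda>l. (Fw (omega \<kappa> (\<lambda>l. l * y l) 1 l) + Fw (omega \<kappa> (\<lambda>l. l * y l) (-1) l)) / 2 - Fw \<kappa>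
      - l ^ 2 / \<kappa> ^ 2 * (\<kappa> ^ 2 * Fd 2 \<kappa> / 2 * y l ^ 2 + \<kappa> * Fd 1 \<kappa> / 2
                         + l ^ 2 * poly (slope_correction_poly \<kappa>) (y l ^ 2)))
    \<in> O[at 0](\<lambda>l. l ^ 6)"
proof -
  define Y where "Y l = 2 * y l / \<kappa>" for l
  define Z where "Z l = (1 + y l ^ 2) / \<kappa> ^ 2" for l
  define P where "P = Fw_sqrt_jet \<kappa>"
  have "(Y \<longlongrightarrow> 2 * s / \<kappa>) (at 0)" and "(Z \<longlongrightarrow> (1 + s ^ 2) / \<kappa> ^ 2) (at 0)"
    unfolding Y_def Z_def by (intro tendsto_intros assms(2); use assms(1) in simp)+
  from poly_even_part_bigo[OF degree_Fw_sqrt_jet this]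
  have even: "(\<lambda>l. (poly P (l * Y l + l ^ 2 * Z l) + poly P (- (l * Y l) + l ^ 2 * Z l)) / 2
      - (coeff P 0 + l ^ 2 * (coeff P 1 * Z l + coeff P 2 * Y l ^ 2)
         + l ^ 4 * (coeff P 2 * Z l ^ 2 + 3 * coeff P 3 * Y l ^ 2 * Z l + coeff P 4 * Y l ^ 4)))
    \<in> O[at 0](\<lambda>l. l ^ 6)"
    by (simp add: P_def)
  have "(\<lambda>l. (Fw (omega \<kappa> (\<lambda>l. l * y l) 1 l) - poly P (l * Y l + l ^ 2 * Z l)) / 2
      + (Fw (omega \<kappa> (\<lambda>l. l * y l) (-1) l) - poly P (- (l * Y l) + l ^ 2 * Z l)) / 2) \<in> O[at 0](\<lambda>l. l ^ 6)"
    using Fw_omega_bigo[OF assms] by (intro sum_in_bigo) (simp_all add: P_def Y_def Z_def)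
  from sum_in_bigo(1)[OF this even]
  have "(\<lambda>l. (Fw (omega \<kappa> (\<lambda>l. l * y l) 1 l) + Fw (omega \<kappa> (\<lambda>l. l * y l) (-1) l)) / 2
      - (coeff P 0 + l ^ 2 * (coeff P 1 * Z l + coeff P 2 * Y l ^ 2)
         + l ^ 4 * (coeff P 2 * Z l ^ 2 + 3 * coeff P 3 * Y l ^ 2 * Z l + coeff P 4 * Y l ^ 4)))
    \<in> O[at 0](\<lambda>l. l ^ 6)"
    by (rule landau_o.big.in_cong[OF always_eventually, THEN iffD1, rotated]) (simp add: field_simps)
  moreover have "coeff P 0 + l ^ 2 * (coeff P 1 * Z l + coeff P 2 * Y l ^ 2)
         + l ^ 4 * (coeff P 2 * Z l ^ 2 + 3 * coeff P 3 * Y l ^ 2 * Z l + coeff P 4 * Y l ^ 4)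
      = Fw \<kappa> + l ^ 2 / \<kappa> ^ 2 * (\<kappa> ^ 2 * Fd 2 \<kappa> / 2 * y l ^ 2 + \<kappa> * Fd 1 \<kappa> / 2
                         + l ^ 2 * poly (slope_correction_poly \<kappa>) (y l ^ 2))" for l
    using assms(1) unfolding P_def Y_def Z_def slope_correction_poly_def Let_def coeff_Fw_sqrt_jet
    by (simp add: field_simps) algebra
  ultimately show ?thesis
    by (simp add: diff_diff_eq)
qed

lemma slope_correction_poly_eval:
  assumes "\<kappa> \<noteq> 0" and "Fd 1 \<kappa> \<noteq> 0" and "Fd 2 \<kappa> \<noteq> 0"
  shows "poly (slope_correction_poly \<kappa>) (- Fd 1 \<kappa> / (\<kappa> * Fd 2 \<kappa>)) / (\<kappa> ^ 2 * Fd 2 \<kappa> / 2)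
    = Fd 1 \<kappa> / (\<kappa> * Fd 2 \<kappa>) * (3/4 - Fd 1 \<kappa> / (\<kappa> * Fd 2 \<kappa>)
        + \<kappa> / 4 * (Fd 2 \<kappa> / Fd 1 \<kappa> - 2 * Fd 3 \<kappa> / Fd 2 \<kappa>)
        + \<kappa> / 12 * (Fd 4 \<kappa> * Fd 1 \<kappa> / (Fd 2 \<kappa>) ^ 2)) / \<kappa> ^ 2"
  using assms unfolding slope_correction_poly_def Let_def coeff_Fw_sqrt_jet
  by (simp add: field_simps) algebra

lemma resonance_quadratic_bigo:
  fixes \<kappa> :: real and y :: "real \<Rightarrow> real"
  assumes "\<kappa> > 0" and "(y \<longlongrightarrow> s) (at 0)"
    and "eventually (\<lambda>l. (Fw (omega \<kappa> (\<lambda>l. l * y l) 1 l) + Fw (omega \<kappa> (\<lambda>l. l * y l) (-1) l)) / 2 = Fw \<kappa>)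
      (at 0)"
  shows "(\<lambda>l. \<kappa> ^ 2 * Fd 2 \<kappa> / 2 * y l ^ 2 + \<kappa> * Fd 1 \<kappa> / 2
      + l ^ 2 * poly (slope_correction_poly \<kappa>) (y l ^ 2)) \<in> O[at 0](\<lambda>l. l ^ 4)"
proof -
  define H where "H l = \<kappa> ^ 2 * Fd 2 \<kappa> / 2 * y l ^ 2 + \<kappa> * Fd 1 \<kappa> / 2
      + l ^ 2 * poly (slope_correction_poly \<kappa>) (y l ^ 2)" for l
  from assms(3) have "eventually (\<lambda>l. (Fw (omega \<kappa> (\<lambda>l. l * y l) 1 l)
      + Fw (omega \<kappa> (\<lambda>l. l * y l) (-1) l)) / 2 - Fw \<kappa> - l ^ 2 / \<kappa> ^ 2 * H l
      = l ^ 2 * (- H l / \<kappa> ^ 2)) (at 0)"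
    by eventually_elim simp
  from landau_o.big.in_cong[OF this] Fw_omega_even_part_bigo[OF assms(1,2)]
  have "(\<lambda>l. l ^ 2 * (- H l / \<kappa> ^ 2)) \<in> O[at 0](\<lambda>l. l ^ (2 + 4))"
    by (simp add: H_def)
  from bigo_power_cancel_at_0[OF this] have "H \<in> O[at 0](\<lambda>l. l ^ 4)"
    using assms(1) by (simp add: divide_inverse)
  then show ?thesis
    by (simp add: H_def[abs_def])
qed

lemma resonance_slope_expansion:
  fixes \<kappa> :: real and y :: "real \<Rightarrow> real"
  assumes "\<kappa> > 0" and "(y \<longlongrightarrow> s) (at 0)" and "s > 0"
    and "eventually (\<lambda>l. (Fw (omega \<kappa> (\<lambda>l. l * y l) 1 l) + Fw (omega \<kappa> (\<lambda>l. l * y l) (-1) l)) / 2 = Fw \<kappa>)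
      (at 0)"
  shows "(\<lambda>l. l * y l - l * sqrt (- Fd 1 \<kappa> / (\<kappa> * Fd 2 \<kappa>))
      * (1 + l ^ 2 / (2 * \<kappa> ^ 2) * (3/4 - Fd 1 \<kappa> / (\<kappa> * Fd 2 \<kappa>)
          + \<kappa> / 4 * (Fd 2 \<kappa> / Fd 1 \<kappa> - 2 * Fd 3 \<kappa> / Fd 2 \<kappa>)
          + \<kappa> / 12 * (Fd 4 \<kappa> * Fd 1 \<kappa> / (Fd 2 \<kappa>) ^ 2))))
    \<in> O[at 0](\<lambda>l. l ^ 5)"
proof -
  define a where "a = \<kappa> ^ 2 * Fd 2 \<kappa> / 2"
  define c where "c = \<kappa> * Fd 1 \<kappa> / 2"
  define b where "b = slope_correction_poly \<kappa>"
  have "(\<lambda>l. a * y l ^ 2 + c + l ^ 2 * poly b (y l ^ 2)) \<in> O[at 0](\<lambda>l. l ^ 4)"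
    unfolding a_def b_def c_def using resonance_quadratic_bigo[OF assms(1,2,4)] .
  moreover have "c \<noteq> 0"
    using assms(1) Fd_1_pos[OF assms(1)] by (simp add: c_def)
  ultimately have root: "a * s ^ 2 + c = 0"
    and expansion: "(\<lambda>l. y l - s + poly b (s ^ 2) / a * l ^ 2 / (2 * s)) \<in> O[at 0](\<lambda>l. l ^ 4)"
    using perturbed_quadratic_limit[OF assms(2)] perturbed_quadratic_root[OF assms(2,3)] by blast+
  with \<open>c \<noteq> 0\<close> have "Fd 2 \<kappa> \<noteq> 0"
    by (auto simp: a_def)
  have "\<kappa> / 2 * (\<kappa> * s ^ 2 * Fd 2 \<kappa> + Fd 1 \<kappa>) = 0"
    using root by (simp add: a_def c_def algebra_simps power2_eq_square)
  then have "\<kappa> * s ^ 2 * Fd 2 \<kappa> + Fd 1 \<kappa> = 0"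
    using assms(1) by simp
  then have s_sq: "s ^ 2 = - Fd 1 \<kappa> / (\<kappa> * Fd 2 \<kappa>)"
    using \<open>Fd 2 \<kappa> \<noteq> 0\<close> assms(1) by (simp add: field_simps)
  then have "sqrt (- Fd 1 \<kappa> / (\<kappa> * Fd 2 \<kappa>)) = s"
    using assms(3) by (intro real_sqrt_unique) simp_all
  define K where "K = 3/4 - Fd 1 \<kappa> / (\<kappa> * Fd 2 \<kappa>)
    + \<kappa> / 4 * (Fd 2 \<kappa> / Fd 1 \<kappa> - 2 * Fd 3 \<kappa> / Fd 2 \<kappa>) + \<kappa> / 12 * (Fd 4 \<kappa> * Fd 1 \<kappa> / (Fd 2 \<kappa>) ^ 2)"
  have correction: "poly b (s ^ 2) / a = - (s ^ 2) * K / \<kappa> ^ 2"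
    using slope_correction_poly_eval[of \<kappa>] Fd_1_pos[OF assms(1)] assms(1) \<open>Fd 2 \<kappa> \<noteq> 0\<close>
    unfolding s_sq a_def b_def K_def by simp
  have "l * (y l - s + poly b (s ^ 2) / a * l ^ 2 / (2 * s)) = l * y l - l * s * (1 + l ^ 2 / (2 * \<kappa> ^ 2) * K)"
    for l unfolding correction using assms(1,3) by (simp add: field_simps power2_eq_square)
  moreover from landau_o.big.mult_left[OF expansion, of "\<lambda>l. l"]
  have "(\<lambda>l. l * (y l - s + poly b (s ^ 2) / a * l ^ 2 / (2 * s))) \<in> O[at 0](\<lambda>l. l ^ 5)"
    by (simp add: power_Suc[symmetric] del: power_Suc)
  ultimately show ?thesis
    unfolding K_def[symmetric] \<open>sqrt (- Fd 1 \<kappa> / (\<kappa> * Fd 2 \<kappa>)) = s\<close> by simp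
qed

theorem lemma4p7:
  fixes \<kappa> \<delta> :: real and xi :: "real \<Rightarrow> real"
  assumes "\<kappa> > 0" and "\<delta> > 0"
    and "real_analytic_on xi {-\<delta><..<\<delta>}"
    and "\<forall>l\<in>{-\<delta><..<\<delta>}. xi (-l) = - xi l"
    and "deriv xi 0 > 0"
    and "\<forall>l\<in>{-\<delta><..<\<delta>}. lam_minus \<kappa> 1 l (xi l) = lam_plus \<kappa> (-1) l (xi l)"
  shows "(\<forall>\<^sub>F l in nhds 0.
            (Fw (omega \<kappa> xi 1 l) + Fw (omega \<kappa> xi (-1) l)) / 2 = Fw \<kappa>)
    \<and> (\<lambda>l. (Fw (omega \<kappa> xi 1 l) - Fw (omega \<kappa> xi (-1) l)) / 2
           - ((Fd 1 \<kappa> + (\<kappa> * Fd 2 \<kappa> - Fd 1 \<kappa>) * l^2 / (2 * \<kappa>^2)) * xi l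
              + Fd 3 \<kappa> * (xi l)^3 / 6))
        \<in> O[at 0](\<lambda>l. l^5)
    \<and> (\<lambda>l. xi l
           - l * sqrt (- Fd 1 \<kappa> / (\<kappa> * Fd 2 \<kappa>))
               * (1 + l^2 / (2 * \<kappa>^2)
                    * (3/4 - Fd 1 \<kappa> / (\<kappa> * Fd 2 \<kappa>)
                       + \<kappa> / 4 * (Fd 2 \<kappa> / Fd 1 \<kappa> - 2 * Fd 3 \<kappa> / Fd 2 \<kappa>)
                       + \<kappa> / 12 * (Fd 4 \<kappa> * Fd 1 \<kappa> / (Fd 2 \<kappa>)^2))))
        \<in> O[at 0](\<lambda>l. l^5)"
proof -
  have "0 \<in> {-\<delta><..<\<delta>}"
    using assms(2) by simp
  then have "xi 0 = 0" and "(xi has_real_derivative deriv xi 0) (at 0)"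
    using assms(4) real_analytic_on_imp_has_deriv[OF assms(3)] by force+
  from has_real_derivative_at_0_imp_slope[OF this(2,1)]
  obtain y where xi: "xi = (\<lambda>l. l * y l)" and y: "(y \<longlongrightarrow> deriv xi 0) (at 0)"
    by (rule that[of "\<lambda>l. xi l / l"])
  have "eventually (\<lambda>l. l \<in> {-\<delta><..<\<delta>}) (nhds 0)"
    using assms(2) by (intro eventually_nhds_in_open) auto
  then have sum: "\<forall>\<^sub>F l in nhds 0. (Fw (omega \<kappa> xi 1 l) + Fw (omega \<kappa> xi (-1) l)) / 2 = Fw \<kappa>"
    using assms(6) resonance_imp_Fw_sum[OF assms(1)] by (auto elim!: eventually_mono simp: omega_def absn_def)
  then have "\<forall>\<^sub>F l in at 0. (Fw (omega \<kappa> xi 1 l) + Fw (omega \<kappa> xi (-1) l)) / 2 = Fw \<kappa>"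
    by (simp add: eventually_at_filter eventually_mono)
  with sum show ?thesis
    using Fw_omega_odd_part_bigo[OF assms(1) y] resonance_slope_expansion[OF assms(1) y assms(5)]
    unfolding xi by simp
qed

end
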